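(* Let $d\in\mathbb{N}$. There exists a constant $\Lambda=\Lambda(d)>0$ such that the following holds. Let $\mu,\nu$ be Borel probability measures on $[0,1]^{d}$, let $n\in\mathbb{N}$, let $\mathcal{T}$ be a finite $\mu$-partition of $[0,1]^{d}$, let $c>1$, and let $$X\subseteq \tfrac{1}{cn}\mathbb{Z}^{d}\cap\bigcup\mathcal{T},\qquad Y\subseteq \tfrac{1}{n}\mathbb{Z}^{d}\cap[0,1]^{d}$$ be finite sets such that $$\mu(T)\geq \frac{1}{n^{d}}|X\cap T|\quad\text{for every }T\in\mathcal{T},$$ and $$\nu(E)\leq \frac{1}{n^{d}}\left|\left\{y\in Y\colon d_{\infty}(y,E)\leq \tfrac{1}{n}\right\}\right|\quad\text{for every $\nu$-measurable }E\subseteq[0,1]^{d},$$ where $d_{\infty}$ is the distance induced by $\|\cdot\|_{\infty}$. Let $f\colon[0,1]^{d}\to[0,1]^{d}$ be a Lipschitz mapping with $f_{\sharp}\mu=\nu$. Then there exists an injective mapping $g\colon X\to Y$ with $$\operatorname{Lip}(g)\leq \Lambda\max\{1,\operatorname{Lip}(f)\}\,c\left(n\cdot\max_{T\in\mathcal{T}}\operatorname{diam}T+1\right).$$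
   Context: Given a measure $\mu$ on $[0,1]^{d}$, a collection $\mathcal{T}$ of subsets of $[0,1]^{d}$ is a $\mu$-partition of $[0,1]^{d}$ if $\mu([0,1]^{d}\setminus\bigcup\mathcal{T})=0$ and $\mu(T\cap T')=0$ for all distinct $T,T'\in\mathcal{T}$. $f_\sharp\mu$ denotes the pushforward measure. Lipschitz constants and diameters are with respect to the Euclidean metric. *)

theory Defs
  imports "HOL-Probability.Probability"
begin

definition unit_cube :: "(real^'n) set" where
  "unit_cube = {x. \<forall>i. 0 \<le> x$i \<and> x$i \<le> 1}"

definition scaled_lattice :: "real \<Rightarrow> (real^'n) set" where
  "scaled_lattice s = {x. \<forall>i. s * x$i \<in> \<int>}"

definition linf_dist :: "real^'n \<Rightarrow> real^'n \<Rightarrow> real" where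
  "linf_dist x y = Max (range (\<lambda>i. \<bar>x$i - y$i\<bar>))"

text \<open>Point-to-set sup-norm distance (infinite for the empty set).\<close>
definition linf_setdist :: "real^'n \<Rightarrow> (real^'n) set \<Rightarrow> ereal" where
  "linf_setdist y E = (INF e\<in>E. ereal (linf_dist y e))"

definition Lip :: "'a::metric_space set \<Rightarrow> ('a \<Rightarrow> 'b::metric_space) \<Rightarrow> real" where
  "Lip U f = Inf {L. lipschitz_on L U f}"

definition mu_partition :: "(real^'n) measure \<Rightarrow> (real^'n) set set \<Rightarrow> bool" where
  "mu_partition \<mu> \<T> \<longleftrightarrow> \<T> \<subseteq> sets \<mu> \<and> (\<forall>T\<in>\<T>. T \<subseteq> unit_cube)
     \<and> measure \<mu> (unit_cube - \<Union>\<T>) = 0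
     \<and> (\<forall>T\<in>\<T>. \<forall>T'\<in>\<T>. T \<noteq> T' \<longrightarrow> measure \<mu> (T \<inter> T') = 0)"

end

theory Submission
  imports Defs
begin

(* Let T x be a piece of the partition containing x, and call y in Y a candidate for x if its
   sup-distance to the compact set f (closure (T x)) is at most 1/n. For A a subset of X, with E the
   union of these images over A, the two density hypotheses and the pushforward give
     |A| <= n^d mu (Union T x) <= n^d mu (f^-1 E) = n^d nu E <= |{y. d_inf (y, E) <= 1/n}|,
   and every y in the last set is a candidate for some x in A. Hall's marriage theorem therefore
   yields an injective choice g of candidates. Each g x lies within d/n + Lip f * max diam T of f x,
   and distinct points of X are at least 1/(c n) apart, so this additive error only adds
   2 c (d + n Lip f max diam T) to the Lipschitz constant of f; hence Lambda = 2 + 2 d works. *)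

lemma inj_on_extend_avoiding:
  assumes "inj_on g\<^sub>1 A" "inj_on g\<^sub>2 B" "\<forall>x\<in>B. g\<^sub>2 x \<notin> g\<^sub>1 ` A"
  shows "inj_on (\<lambda>x. if x \<in> A then g\<^sub>1 x else g\<^sub>2 x) (A \<union> B)"
  using assms unfolding inj_on_def by (metis Un_iff imageI)

lemma hall_condition_remove_critical:
  fixes N :: "'a \<Rightarrow> 'b set"
  assumes hall: "\<forall>A\<subseteq>X. card A \<le> card (\<Union>(N ` A))"
    and fin: "\<forall>x\<in>X. finite (N x)" and "finite X"
    and critical: "A \<subseteq> X" "card (\<Union>(N ` A)) \<le> card A"
    and "S \<subseteq> \<Union>(N ` A)" "B \<subseteq> X - A"
  shows "card B \<le> card (\<Union>x\<in>B. N x - S)"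
proof -
  have fin_A: "finite A" and fin_B: "finite B"
    using assms finite_subset by blast+
  have fin_NA: "finite (\<Union>(N ` A))" and fin_NB: "finite (\<Union>(N ` B))"
    using fin fin_A fin_B \<open>A \<subseteq> X\<close> \<open>B \<subseteq> X - A\<close> by auto
  have "card B + card A = card (B \<union> A)"
    using \<open>B \<subseteq> X - A\<close> fin_A fin_B by (intro card_Un_disjoint[symmetric]) auto
  also have "\<dots> \<le> card (\<Union>(N ` (B \<union> A)))"
    using hall \<open>A \<subseteq> X\<close> \<open>B \<subseteq> X - A\<close> by blast
  also have "\<Union>(N ` (B \<union> A)) = (\<Union>x\<in>B. N x - \<Union>(N ` A)) \<union> \<Union>(N ` A)"
    by auto
  also have "card \<dots> = card (\<Union>x\<in>B. N x - \<Union>(N ` A)) + card (\<Union>(N ` A))"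
    using fin_NA fin_NB by (intro card_Un_disjoint) auto
  finally have "card B \<le> card (\<Union>x\<in>B. N x - \<Union>(N ` A))"
    using critical(2) by linarith
  also have "\<dots> \<le> card (\<Union>x\<in>B. N x - S)"
    using \<open>S \<subseteq> \<Union>(N ` A)\<close> fin_NB by (intro card_mono) auto
  finally show ?thesis .
qed

lemma hall_condition_remove_point:
  fixes N :: "'a \<Rightarrow> 'b set"
  assumes surplus: "\<forall>A. A \<subset> X \<and> A \<noteq> {} \<longrightarrow> card A < card (\<Union>(N ` A))"
    and fin: "\<forall>x\<in>X. finite (N x)" and "finite X" "x \<in> X" "B \<subseteq> X - {x}"
  shows "card B \<le> card (\<Union>z\<in>B. N z - {y})"
proof (cases "B = {}")
  case False
  have "finite (\<Union>(N ` B))"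
    using assms finite_subset by (metis Diff_subset finite_UN subset_eq)
  moreover have "card B < card (\<Union>(N ` B))"
    using surplus False \<open>x \<in> X\<close> \<open>B \<subseteq> X - {x}\<close> by blast
  moreover have "(\<Union>z\<in>B. N z - {y}) = \<Union>(N ` B) - {y}" by auto
  ultimately show ?thesis
    using diff_card_le_card_Diff[of "{y}" "\<Union>(N ` B)"] by simp
qed simp

theorem marriage_theorem:
  fixes N :: "'a \<Rightarrow> 'b set"
  assumes "finite X" "\<forall>x\<in>X. finite (N x)" "\<forall>A\<subseteq>X. card A \<le> card (\<Union>(N ` A))"
  shows "\<exists>g. (\<forall>x\<in>X. g x \<in> N x) \<and> inj_on g X"
  using assms
proof (induction "card X" arbitrary: X N rule: less_induct)
  case less
  have extend: "\<exists>g. (\<forall>x\<in>X. g x \<in> N x) \<and> inj_on g X"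
    if "A \<subseteq> X" "A \<noteq> {}" and g\<^sub>1: "\<forall>x\<in>A. g\<^sub>1 x \<in> N x" "inj_on g\<^sub>1 A"
      and rest: "\<forall>B\<subseteq>X - A. card B \<le> card (\<Union>x\<in>B. N x - g\<^sub>1 ` A)" for A g\<^sub>1
  proof -
    have "X - A \<subset> X" using that(1,2) by blast
    then have "card (X - A) < card X" using less.prems(1) by (simp add: psubset_card_mono)
    then obtain g\<^sub>2 where g\<^sub>2: "\<forall>x\<in>X - A. g\<^sub>2 x \<in> N x - g\<^sub>1 ` A" "inj_on g\<^sub>2 (X - A)"
      using less.hyps[of "X - A" "\<lambda>x. N x - g\<^sub>1 ` A"] less.prems rest by auto
    have "inj_on (\<lambda>x. if x \<in> A then g\<^sub>1 x else g\<^sub>2 x) (A \<union> (X - A))"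
      using g\<^sub>1 g\<^sub>2 by (intro inj_on_extend_avoiding) auto
    moreover have "A \<union> (X - A) = X" using \<open>A \<subseteq> X\<close> by blast
    ultimately show ?thesis using g\<^sub>1 g\<^sub>2 by (intro exI[of _ "\<lambda>x. if x \<in> A then g\<^sub>1 x else g\<^sub>2 x"]) auto
  qed
  (* Either a nonempty proper subset A is critical, and A and X - A are matched separately, or
     every such subset has a surplus, so any first choice x \<mapsto> y keeps the condition intact. *)
  show ?case
  proof (cases "X = {}")
    case False
    show ?thesis
    proof (cases "\<exists>A. A \<subset> X \<and> A \<noteq> {} \<and> card (\<Union>(N ` A)) \<le> card A")
      case True
      then obtain A where A: "A \<subset> X" "A \<noteq> {}" "card (\<Union>(N ` A)) \<le> card A" by blast
      have "card A < card X" "finite A"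
        using A(1) less.prems(1) by (auto simp: psubset_card_mono finite_subset)
      moreover have "\<forall>B\<subseteq>A. card B \<le> card (\<Union>(N ` B))"
        using less.prems(3) A(1) by auto
      ultimately obtain g\<^sub>1 where g\<^sub>1: "\<forall>x\<in>A. g\<^sub>1 x \<in> N x" "inj_on g\<^sub>1 A"
        using less.hyps[of A N] less.prems(2) A(1) by blast
      have "g\<^sub>1 ` A \<subseteq> \<Union>(N ` A)" using g\<^sub>1(1) by blast
      then have "\<forall>B\<subseteq>X - A. card B \<le> card (\<Union>x\<in>B. N x - g\<^sub>1 ` A)"
        using hall_condition_remove_critical[OF less.prems(3,2,1) _ A(3)] A(1) by blast
      then show ?thesis using extend A g\<^sub>1 by blast
    next
      case False
      then have surplus: "\<forall>A. A \<subset> X \<and> A \<noteq> {} \<longrightarrow> card A < card (\<Union>(N ` A))"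
        by (meson not_le)
      obtain x where "x \<in> X" using \<open>X \<noteq> {}\<close> by blast
      then have "card {x} \<le> card (\<Union>(N ` {x}))" using less.prems(3) by blast
      then obtain y where "y \<in> N x" by fastforce
      have "\<forall>B\<subseteq>X - {x}. card B \<le> card (\<Union>z\<in>B. N z - (\<lambda>_. y) ` {x})"
        using hall_condition_remove_point[OF surplus less.prems(2,1) \<open>x \<in> X\<close>] by simp
      then show ?thesis
        using extend[of "{x}" "\<lambda>_. y"] \<open>x \<in> X\<close> \<open>y \<in> N x\<close> by auto
    qed
  qed simp
qed

lemma (in finite_measure) measure_Union_almost_disjoint:
  assumes "finite F" "F \<subseteq> sets M"
    and "\<And>S T. S \<in> F \<Longrightarrow> T \<in> F \<Longrightarrow> S \<noteq> T \<Longrightarrow> measure M (S \<inter> T) = 0"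
  shows "measure M (\<Union>F) = (\<Sum>S\<in>F. measure M S)"
proof (rule measure_Union_AE)
  show "pairwise (\<lambda>S T. AE x in M. x \<notin> S \<or> x \<notin> T) F"
  proof (rule pairwiseI)
    fix S T assume "S \<in> F" "T \<in> F" "S \<noteq> T"
    then have "S \<inter> T \<in> null_sets M"
      using assms by (auto simp: null_sets_def emeasure_eq_measure)
    then show "AE x in M. x \<notin> S \<or> x \<notin> T" by (auto dest: AE_not_in)
  qed
qed (use assms in \<open>auto simp: fmeasurable_eq_sets\<close>)


lemma lipschitz_on_Lip:
  assumes "lipschitz_on L U f"
  shows "lipschitz_on (Lip U f) U f"
proof -
  let ?S = "{L. lipschitz_on L U f}"
  have ne: "?S \<noteq> {}" using assms by blast
  have "0 \<le> Lip U f"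
    unfolding Lip_def by (rule cInf_greatest[OF ne]) (auto simp: lipschitz_on_def)
  moreover have "dist (f x) (f y) \<le> Lip U f * dist x y" if "x \<in> U" "y \<in> U" for x y
  proof (cases "x = y")
    case False
    then have "dist x y > 0" by simp
    have "dist (f x) (f y) / dist x y \<le> Lip U f"
      unfolding Lip_def
    proof (rule cInf_greatest[OF ne])
      fix L assume "L \<in> ?S"
      then show "dist (f x) (f y) / dist x y \<le> L"
        using that \<open>dist x y > 0\<close> by (auto simp: lipschitz_on_def divide_le_eq)
    qed
    then show ?thesis using \<open>dist x y > 0\<close> by (simp add: divide_le_eq)
  qed simp
  ultimately show ?thesis by (auto simp: lipschitz_on_def)
qed

lemma Lip_le:
  assumes "lipschitz_on K U g"
  shows "Lip U g \<le> K"
  unfolding Lip_def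
  by (rule cInf_lower) (use assms in \<open>auto simp: lipschitz_on_def bdd_below_def\<close>)

lemma lipschitz_on_close_to_lipschitz:
  fixes f g :: "'a::metric_space \<Rightarrow> 'b::metric_space"
  assumes "lipschitz_on L X f" "\<delta> > 0" "r \<ge> 0"
    and separated: "\<And>x x'. x \<in> X \<Longrightarrow> x' \<in> X \<Longrightarrow> x \<noteq> x' \<Longrightarrow> \<delta> \<le> dist x x'"
    and close: "\<And>x. x \<in> X \<Longrightarrow> dist (g x) (f x) \<le> r"
  shows "lipschitz_on (L + 2 * r / \<delta>) X g"
proof (rule lipschitz_onI)
  have "0 \<le> L" using assms(1) by (rule lipschitz_on_nonneg)
  then show "0 \<le> L + 2 * r / \<delta>" using assms(2,3) by simp
  fix x x' assume "x \<in> X" "x' \<in> X"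
  show "dist (g x) (g x') \<le> (L + 2 * r / \<delta>) * dist x x'"
  proof (cases "x = x'")
    case False
    have "2 * r = 2 * r / \<delta> * \<delta>" using assms(2) by simp
    also have "\<dots> \<le> 2 * r / \<delta> * dist x x'"
      using separated[OF \<open>x \<in> X\<close> \<open>x' \<in> X\<close> False] assms(2,3) by (intro mult_left_mono) auto
    finally have "2 * r \<le> 2 * r / \<delta> * dist x x'" .
    moreover have "dist (g x) (g x') \<le> dist (g x) (f x) + dist (f x) (f x') + dist (f x') (g x')"
      using dist_triangle[of "g x" "g x'" "f x"] dist_triangle[of "f x" "g x'" "f x'"] by linarith
    moreover have "dist (f x) (f x') \<le> L * dist x x'"
      using lipschitz_onD[OF assms(1) \<open>x \<in> X\<close> \<open>x' \<in> X\<close>] .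
    moreover have "dist (f x') (g x') \<le> r"
      using close[OF \<open>x' \<in> X\<close>] by (simp add: dist_commute)
    ultimately show ?thesis
      using close[OF \<open>x \<in> X\<close>] by (simp add: distrib_right)
  qed simp
qed

lemma perturbed_Lipschitz_constant_le:
  fixes d n c D L :: real
  assumes "d \<ge> 1" "n \<ge> 1" "c \<ge> 1" "D \<ge> 0" "L \<ge> 0"
  shows "L + 2 * (d / n + L * D) / (1 / (c * n)) \<le> (2 + 2 * d) * max 1 L * c * (n * D + 1)"
proof -
  have "L + 2 * (d / n + L * D) / (1 / (c * n)) = L + 2 * c * d + 2 * c * n * L * D"
    using assms(2) by (simp add: field_simps)
  also have "\<dots> \<le> (2 + 2 * d) * max 1 L * c * (n * D + 1)"
  proof -
    have "max 1 L \<le> max 1 L * c"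
      using assms(3) by (simp add: mult_le_cancel_left1)
    then have "L \<le> max 1 L * c" by linarith
    moreover have "c * d \<le> d * max 1 L * c" "c * n * L * D \<le> max 1 L * c * n * D"
      using assms by (auto intro!: mult_mono mult_right_mono simp: mult.assoc)
    moreover have "0 \<le> d * max 1 L * c * n * D" "0 \<le> max 1 L * c"
      using assms by auto
    ultimately show ?thesis by (simp add: algebra_simps)
  qed
  finally show ?thesis .
qed

lemma abs_component_le_linf_dist: "\<bar>x$i - y$i\<bar> \<le> linf_dist x y"
  unfolding linf_dist_def by (rule Max_ge) auto

lemma dist_le_linf_dist: "dist x y \<le> real CARD('n) * linf_dist x (y::real^'n)"
proof -
  have "dist x y \<le> (\<Sum>i\<in>UNIV. \<bar>(x - y)$i\<bar>)"
    unfolding dist_norm by (rule norm_le_l1_cart)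
  also have "\<dots> \<le> (\<Sum>i\<in>(UNIV::'n set). linf_dist x y)"
    by (intro sum_mono) (simp add: abs_component_le_linf_dist)
  finally show ?thesis by simp
qed

lemma linf_setdist_UN_le:
  assumes "finite A" "linf_setdist y (\<Union>x\<in>A. E x) \<le> ereal r"
  shows "\<exists>x\<in>A. linf_setdist y (E x) \<le> ereal r"
proof -
  have "linf_setdist y (\<Union>x\<in>A. E x) = Inf ((\<lambda>x. linf_setdist y (E x)) ` A)"
    unfolding linf_setdist_def by (auto intro!: antisym INF_greatest INF_lower2)
  moreover have "A \<noteq> {}"
    using assms(2) by (auto simp: linf_setdist_def top_ereal_def)
  ultimately have "Min ((\<lambda>x. linf_setdist y (E x)) ` A) \<le> ereal r"
    using assms by (simp add: Min_Inf)
  moreover have "Min ((\<lambda>x. linf_setdist y (E x)) ` A) \<in> (\<lambda>x. linf_setdist y (E x)) ` A"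
    using \<open>finite A\<close> \<open>A \<noteq> {}\<close> by (intro Min_in) auto
  ultimately show ?thesis by force
qed

lemma dist_le_of_linf_setdist_le:
  fixes y z :: "real^'n"
  assumes "linf_setdist y E \<le> ereal r" "\<And>e. e \<in> E \<Longrightarrow> dist e z \<le> s"
  shows "dist y z \<le> real CARD('n) * r + s"
proof (rule field_le_epsilon)
  fix \<epsilon> :: real assume "\<epsilon> > 0"
  then have "linf_setdist y E < ereal (r + \<epsilon> / CARD('n))"
    using assms(1) by (simp add: order_le_less_trans)
  then obtain e where "e \<in> E" "linf_dist y e < r + \<epsilon> / CARD('n)"
    unfolding linf_setdist_def by (auto simp: Inf_less_iff)
  then have "dist y e \<le> real CARD('n) * r + \<epsilon>"
    using dist_le_linf_dist[of y e] by (simp add: field_simps)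
  then show "dist y z \<le> real CARD('n) * r + s + \<epsilon>"
    using assms(2)[OF \<open>e \<in> E\<close>] dist_triangle[of y z e] by linarith
qed

lemma scaled_lattice_dist_ge:
  assumes "x \<in> scaled_lattice s" "y \<in> scaled_lattice s" "s > 0" "x \<noteq> (y::real^'n)"
  shows "1 / s \<le> dist x y"
proof -
  obtain i where "x$i \<noteq> y$i" using assms(4) by (auto simp: vec_eq_iff)
  have "s * x$i \<in> \<int>" "s * y$i \<in> \<int>"
    using assms(1,2) unfolding scaled_lattice_def by auto
  then obtain a b where ab: "s * x$i = of_int a" "s * y$i = of_int b"
    by (auto elim!: Ints_cases)
  have "a \<noteq> b"
  proof
    assume "a = b"
    then have "s * x$i = s * y$i" using ab by simp
    then show False using \<open>x$i \<noteq> y$i\<close> assms(3) by simp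
  qed
  then have "1 \<le> \<bar>of_int a - of_int b :: real\<bar>"
    by (metis of_int_1_le_iff of_int_abs of_int_diff zero_less_abs_iff right_minus_eq int_one_le_iff_zero_less)
  also have "\<dots> = s * \<bar>x$i - y$i\<bar>"
    using ab assms(3) by (metis abs_mult abs_of_pos right_diff_distrib)
  also have "\<bar>x$i - y$i\<bar> \<le> dist x y"
    using component_le_norm_cart[of "x - y" i] by (simp add: dist_norm)
  finally show ?thesis using assms(3) by (simp add: divide_le_eq mult.commute)
qed

lemma unit_cube_eq_cbox: "unit_cube = cbox 0 (1::real^'n)"
  unfolding unit_cube_def by (auto simp: mem_box_cart)

lemma compact_unit_cube: "compact (unit_cube :: (real^'n) set)"
  by (simp add: unit_cube_eq_cbox compact_cbox)

locale cube_matching =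
  fixes \<mu> \<nu> :: "(real^'n) measure" and n :: nat and \<T> :: "(real^'n) set set"
    and c :: real and X Y :: "(real^'n) set" and f :: "real^'n \<Rightarrow> real^'n"
  assumes prob_\<mu>: "prob_space \<mu>" and sets_\<mu>: "sets \<mu> = sets (restrict_space borel unit_cube)"
    and sets_\<nu>: "sets \<nu> = sets (restrict_space borel unit_cube)"
    and n_ge_1: "n \<ge> 1" and finite_\<T>: "finite \<T>" and partition: "mu_partition \<mu> \<T>"
    and c_gt_1: "c > 1"
    and finite_X: "finite X" and X_subset: "X \<subseteq> scaled_lattice (c * real n) \<inter> \<Union>\<T>"
    and finite_Y: "finite Y"
    and X_dense: "\<forall>T\<in>\<T>. measure \<mu> T \<ge> real (card (X \<inter> T)) / real n ^ CARD('n)"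
    and Y_dense: "\<forall>E\<in>sets \<nu>. measure \<nu> E \<le>
          real (card {y\<in>Y. linf_setdist y E \<le> ereal (1 / real n)}) / real n ^ CARD('n)"
    and f_cube: "f ` unit_cube \<subseteq> unit_cube" and f_lipschitz: "\<exists>L. lipschitz_on L unit_cube f"
    and pushforward: "distr \<mu> \<nu> f = \<nu>"
begin

definition piece :: "real^'n \<Rightarrow> (real^'n) set" where
  "piece x = (SOME T. T \<in> \<T> \<and> x \<in> T)"

(* Taking the closure makes the image compact, hence nu-measurable, so that the density
   hypothesis on Y applies to unions of these images. *)
definition candidates :: "real^'n \<Rightarrow> (real^'n) set" where
  "candidates x = {y\<in>Y. linf_setdist y (f ` closure (piece x)) \<le> ereal (1 / real n)}"

lemma partition_sets: "\<T> \<subseteq> sets \<mu>"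
  and partition_subset_cube: "T \<in> \<T> \<Longrightarrow> T \<subseteq> unit_cube"
  and partition_almost_disjoint: "S \<in> \<T> \<Longrightarrow> T \<in> \<T> \<Longrightarrow> S \<noteq> T \<Longrightarrow> measure \<mu> (S \<inter> T) = 0"
  using partition unfolding mu_partition_def by auto

lemma piece_in_partition:
  assumes "x \<in> X"
  shows "piece x \<in> \<T> \<and> x \<in> piece x"
proof -
  have "\<exists>T. T \<in> \<T> \<and> x \<in> T" using assms X_subset by auto
  then show ?thesis unfolding piece_def by (rule someI_ex)
qed

lemma piece_subset_cube: "x \<in> X \<Longrightarrow> piece x \<subseteq> unit_cube"
  using piece_in_partition partition_subset_cube by blast

lemma X_subset_cube: "X \<subseteq> unit_cube"
  using piece_in_partition piece_subset_cube by blast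

lemma closure_piece_subset_cube: "x \<in> X \<Longrightarrow> closure (piece x) \<subseteq> unit_cube"
  using compact_unit_cube piece_subset_cube by (intro closure_minimal) (auto intro: compact_imp_closed)

lemma bounded_partition_member: "T \<in> \<T> \<Longrightarrow> bounded T"
  using bounded_subset[OF compact_imp_bounded[OF compact_unit_cube] partition_subset_cube] .

lemma bounded_piece: "x \<in> X \<Longrightarrow> bounded (piece x)"
  using piece_in_partition bounded_partition_member by blast

lemma lipschitz_on_Lip_f: "lipschitz_on (Lip unit_cube f) unit_cube f"
proof -
  obtain L where "lipschitz_on L unit_cube f" using f_lipschitz by blast
  then show ?thesis by (rule lipschitz_on_Lip)
qed

lemma space_\<mu>: "space \<mu> = unit_cube"
  using sets_eq_imp_space_eq[OF sets_\<mu>] by (simp add: space_restrict_space)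

lemma measurable_f: "f \<in> \<mu> \<rightarrow>\<^sub>M \<nu>"
proof -
  have "continuous_on unit_cube f"
    using lipschitz_on_Lip_f by (rule lipschitz_on_continuous_on)
  then have "f \<in> restrict_space borel unit_cube \<rightarrow>\<^sub>M restrict_space borel unit_cube"
    using f_cube by (intro measurable_restrict_space2)
      (auto simp: space_restrict_space borel_measurable_continuous_on_restrict)
  then show ?thesis using measurable_cong_sets[OF sets_\<mu> sets_\<nu>] by simp
qed

lemma measure_\<nu>_eq_preimage:
  assumes "E \<in> sets \<nu>"
  shows "measure \<nu> E = measure \<mu> (f -` E \<inter> unit_cube)"
proof -
  have "measure \<nu> E = measure (distr \<mu> \<nu> f) E" using pushforward by simp
  also have "\<dots> = measure \<mu> (f -` E \<inter> space \<mu>)" by (rule measure_distr[OF measurable_f assms])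
  finally show ?thesis by (simp add: space_\<mu>)
qed

lemma compact_image_piece:
  assumes "x \<in> X"
  shows "compact (f ` closure (piece x))"
proof (rule compact_continuous_image)
  show "continuous_on (closure (piece x)) f"
    using lipschitz_on_continuous_on[OF lipschitz_on_Lip_f] closure_piece_subset_cube[OF assms]
    by (rule continuous_on_subset)
  show "compact (closure (piece x))"
    using bounded_piece[OF assms] by (simp add: compact_closure)
qed

lemma card_le_measure_pieces:
  assumes "A \<subseteq> X"
  shows "real (card A) \<le> real n ^ CARD('n) * measure \<mu> (\<Union>(piece ` A))"
proof -
  have "finite A" using assms finite_X finite_subset by blast
  have pieces: "piece ` A \<subseteq> \<T>" using assms piece_in_partition by auto
  have "card A \<le> card (X \<inter> \<Union>(piece ` A))"
    using assms piece_in_partition finite_X by (intro card_mono) auto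
  also have "X \<inter> \<Union>(piece ` A) = (\<Union>T\<in>piece ` A. X \<inter> T)"
    by blast
  also have "card \<dots> \<le> (\<Sum>T\<in>piece ` A. card (X \<inter> T))"
    by (rule card_UN_le) (simp add: \<open>finite A\<close>)
  finally have "real (card A) \<le> (\<Sum>T\<in>piece ` A. real (card (X \<inter> T)))"
    by (simp flip: of_nat_sum)
  also have "\<dots> \<le> (\<Sum>T\<in>piece ` A. real n ^ CARD('n) * measure \<mu> T)"
    using X_dense pieces n_ge_1 by (intro sum_mono) (auto simp: divide_le_eq mult.commute)
  also have "\<dots> = real n ^ CARD('n) * (\<Sum>T\<in>piece ` A. measure \<mu> T)"
    by (simp add: sum_distrib_left)
  also have "(\<Sum>T\<in>piece ` A. measure \<mu> T) = measure \<mu> (\<Union>(piece ` A))"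
  proof -
    have "piece ` A \<subseteq> sets \<mu>"
      and "\<And>S T. S \<in> piece ` A \<Longrightarrow> T \<in> piece ` A \<Longrightarrow> S \<noteq> T \<Longrightarrow> measure \<mu> (S \<inter> T) = 0"
      using pieces partition_sets partition_almost_disjoint by (blast, meson subsetD)
    then show ?thesis
      using finite_measure.measure_Union_almost_disjoint[OF prob_space.finite_measure[OF prob_\<mu>]]
        \<open>finite A\<close> by simp
  qed
  finally show ?thesis .
qed

lemma image_pieces_in_sets:
  assumes "A \<subseteq> X"
  shows "(\<Union>x\<in>A. f ` closure (piece x)) \<in> sets \<nu>"
proof -
  have "finite A" using assms finite_X finite_subset by blast
  then have "compact (\<Union>x\<in>A. f ` closure (piece x))"
    using assms compact_image_piece by (intro compact_UN) auto
  moreover have "(\<Union>x\<in>A. f ` closure (piece x)) \<subseteq> unit_cube"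
    using assms closure_piece_subset_cube f_cube by blast
  ultimately show ?thesis
    unfolding sets_\<nu> using compact_unit_cube
    by (subst sets_restrict_space_iff) (auto intro: borel_closed compact_imp_closed)
qed

lemma measure_pieces_le_measure_image:
  assumes "A \<subseteq> X"
  shows "measure \<mu> (\<Union>(piece ` A)) \<le> measure \<nu> (\<Union>x\<in>A. f ` closure (piece x))"
proof -
  let ?E = "\<Union>x\<in>A. f ` closure (piece x)"
  have E: "?E \<in> sets \<nu>" using assms by (rule image_pieces_in_sets)
  have "\<Union>(piece ` A) \<subseteq> f -` ?E \<inter> unit_cube"
    using assms piece_subset_cube closure_subset by fastforce
  moreover have "f -` ?E \<inter> unit_cube \<in> sets \<mu>"
    using measurable_sets[OF measurable_f E] by (simp add: space_\<mu>)
  ultimately have "measure \<mu> (\<Union>(piece ` A)) \<le> measure \<mu> (f -` ?E \<inter> unit_cube)"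
    using prob_space.finite_measure[OF prob_\<mu>] by (intro finite_measure.finite_measure_mono)
  also have "\<dots> = measure \<nu> ?E"
    using measure_\<nu>_eq_preimage[OF E] by simp
  finally show ?thesis .
qed

lemma hall_condition_candidates:
  assumes "A \<subseteq> X"
  shows "card A \<le> card (\<Union>(candidates ` A))"
proof -
  let ?E = "\<Union>x\<in>A. f ` closure (piece x)"
  have "finite A" using assms finite_X finite_subset by blast
  have "?E \<in> sets \<nu>" using assms by (rule image_pieces_in_sets)
  have "real (card A) \<le> real n ^ CARD('n) * measure \<mu> (\<Union>(piece ` A))"
    using assms by (rule card_le_measure_pieces)
  also have "\<dots> \<le> real n ^ CARD('n) * measure \<nu> ?E"
    using assms measure_pieces_le_measure_image by (intro mult_left_mono) auto
  also have "\<dots> \<le> card {y\<in>Y. linf_setdist y ?E \<le> ereal (1 / real n)}"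
    using Y_dense \<open>?E \<in> sets \<nu>\<close> n_ge_1 by (auto simp: field_simps)
  also have "\<dots> \<le> card (\<Union>(candidates ` A))"
  proof -
    have "{y\<in>Y. linf_setdist y ?E \<le> ereal (1 / real n)} \<subseteq> \<Union>(candidates ` A)"
      using linf_setdist_UN_le[OF \<open>finite A\<close>] by (fastforce simp: candidates_def)
    moreover have "finite (\<Union>(candidates ` A))"
      using finite_Y by (rule finite_subset[rotated]) (auto simp: candidates_def)
    ultimately show ?thesis by (simp add: card_mono)
  qed
  finally show ?thesis by simp
qed

lemma partition_nonempty: "\<T> \<noteq> {}"
proof
  assume "\<T> = {}"
  then have "measure \<mu> (space \<mu>) = 0"
    using partition space_\<mu> by (simp add: mu_partition_def)
  then show False using prob_space.prob_space[OF prob_\<mu>] by simp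
qed

lemma diameter_piece_le: "x \<in> X \<Longrightarrow> diameter (piece x) \<le> Max (diameter ` \<T>)"
  using piece_in_partition finite_\<T> by (intro Max_ge) auto

lemma Max_diameter_nonneg: "0 \<le> Max (diameter ` \<T>)"
proof -
  obtain T where "T \<in> \<T>" using partition_nonempty by blast
  then have "0 \<le> diameter T"
    by (intro diameter_ge_0 bounded_partition_member)
  also have "\<dots> \<le> Max (diameter ` \<T>)"
    using \<open>T \<in> \<T>\<close> finite_\<T> by (intro Max_ge) auto
  finally show ?thesis .
qed

lemma dist_candidate_le:
  assumes "x \<in> X" "y \<in> candidates x"
  shows "dist y (f x) \<le> CARD('n) / real n + Lip unit_cube f * Max (diameter ` \<T>)"
proof -
  have "dist e (f x) \<le> Lip unit_cube f * Max (diameter ` \<T>)"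
    if e: "e \<in> f ` closure (piece x)" for e
  proof -
    obtain p where p: "p \<in> closure (piece x)" "e = f p" using e by blast
    have "dist p x \<le> diameter (closure (piece x))"
      using bounded_piece[OF assms(1)] p(1) piece_in_partition[OF assms(1)] closure_subset
      by (intro diameter_bounded_bound) auto
    also have "\<dots> \<le> Max (diameter ` \<T>)"
      using diameter_piece_le[OF assms(1)] by (simp add: diameter_closure bounded_piece[OF assms(1)])
    finally have "dist p x \<le> Max (diameter ` \<T>)" .
    moreover have "dist (f p) (f x) \<le> Lip unit_cube f * dist p x"
      using lipschitz_onD[OF lipschitz_on_Lip_f] p(1) closure_piece_subset_cube[OF assms(1)]
        piece_in_partition[OF assms(1)] piece_subset_cube[OF assms(1)] by blast
    ultimately show ?thesis
      using p(2) lipschitz_on_nonneg[OF lipschitz_on_Lip_f] by (metis mult_left_mono order_trans)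
  qed
  moreover have "linf_setdist y (f ` closure (piece x)) \<le> ereal (1 / real n)"
    using assms(2) by (simp add: candidates_def)
  ultimately show ?thesis
    using dist_le_of_linf_setdist_le by fastforce
qed

lemma injective_candidate_choice:
  obtains g where "\<forall>x\<in>X. g x \<in> candidates x" "inj_on g X"
proof -
  have "\<forall>x\<in>X. finite (candidates x)"
    using finite_Y by (auto simp: candidates_def)
  then show ?thesis
    using marriage_theorem[OF finite_X] hall_condition_candidates that by blast
qed

lemma exists_injective_matching_Lip_le:
  "\<exists>g. g ` X \<subseteq> Y \<and> inj_on g X \<and>
     Lip X g \<le> (2 + 2 * real CARD('n)) * max 1 (Lip unit_cube f) * c *
       (real n * Max (diameter ` \<T>) + 1)"
proof -
  define d where "d = real CARD('n)"
  define L where "L = Lip unit_cube f"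
  define D where "D = Max (diameter ` \<T>)"
  define r where "r = d / real n + L * D"
  have "d \<ge> 1" "real n \<ge> 1" "c \<ge> 1" "D \<ge> 0" "L \<ge> 0"
    using n_ge_1 c_gt_1 Max_diameter_nonneg lipschitz_on_nonneg[OF lipschitz_on_Lip_f]
    by (auto simp: d_def D_def L_def)
  obtain g where g: "\<forall>x\<in>X. g x \<in> candidates x" "inj_on g X"
    using injective_candidate_choice by blast
  have "lipschitz_on (L + 2 * r / (1 / (c * real n))) X g"
  proof (rule lipschitz_on_close_to_lipschitz)
    show "lipschitz_on L X f"
      unfolding L_def using lipschitz_on_Lip_f X_subset_cube by (rule lipschitz_on_subset)
    show "1 / (c * real n) \<le> dist x x'" if "x \<in> X" "x' \<in> X" "x \<noteq> x'" for x x'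
      using scaled_lattice_dist_ge[of x "c * real n" x'] that X_subset \<open>c \<ge> 1\<close> \<open>real n \<ge> 1\<close>
      by auto
    show "dist (g x) (f x) \<le> r" if "x \<in> X" for x
      using dist_candidate_le[OF that] g(1) that by (simp add: r_def d_def L_def D_def)
  qed (use \<open>c \<ge> 1\<close> \<open>real n \<ge> 1\<close> \<open>D \<ge> 0\<close> \<open>L \<ge> 0\<close> in \<open>auto simp: r_def d_def\<close>)
  then have "Lip X g \<le> L + 2 * r / (1 / (c * real n))"
    by (rule Lip_le)
  also have "\<dots> \<le> (2 + 2 * d) * max 1 L * c * (real n * D + 1)"
    unfolding r_def using \<open>d \<ge> 1\<close> \<open>real n \<ge> 1\<close> \<open>c \<ge> 1\<close> \<open>D \<ge> 0\<close> \<open>L \<ge> 0\<close>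
    by (rule perturbed_Lipschitz_constant_le)
  finally show ?thesis
    using g candidates_def unfolding d_def L_def D_def by blast
qed

end

theorem lemma1:
  shows "\<exists>\<Lambda>::real. \<Lambda> > 0 \<and>
    (\<forall>(\<mu>::(real^'n) measure) (\<nu>::(real^'n) measure) (n::nat) (\<T>::(real^'n) set set)
        (c::real) (X::(real^'n) set) (Y::(real^'n) set) (f::real^'n \<Rightarrow> real^'n).
      prob_space \<mu> \<and> sets \<mu> = sets (restrict_space borel unit_cube) \<and>
      prob_space \<nu> \<and> sets \<nu> = sets (restrict_space borel unit_cube) \<and>
      n \<ge> 1 \<and>
      finite \<T> \<and> mu_partition \<mu> \<T> \<and>
      c > 1 \<and>
      finite X \<and> X \<subseteq> scaled_lattice (c * real n) \<inter> \<Union>\<T> \<and>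
      finite Y \<and> Y \<subseteq> scaled_lattice (real n) \<inter> unit_cube \<and>
      (\<forall>T\<in>\<T>. measure \<mu> T \<ge> real (card (X \<inter> T)) / real n ^ CARD('n)) \<and>
      (\<forall>E\<in>sets \<nu>. measure \<nu> E \<le>
          real (card {y\<in>Y. linf_setdist y E \<le> ereal (1 / real n)}) / real n ^ CARD('n)) \<and>
      f ` unit_cube \<subseteq> unit_cube \<and> (\<exists>L. lipschitz_on L unit_cube f) \<and>
      distr \<mu> \<nu> f = \<nu>
      \<longrightarrow>
      (\<exists>g. g ` X \<subseteq> Y \<and> inj_on g X \<and>
         Lip X g \<le> \<Lambda> * max 1 (Lip unit_cube f) * c *
             (real n * Max (diameter ` \<T>) + 1)))"
proof (intro exI[of _ "2 + 2 * real CARD('n)"] conjI allI impI, goal_cases)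
  case 1
  show ?case by simp
next
  case (2 \<mu> \<nu> n \<T> c X Y f)
  then have "cube_matching \<mu> \<nu> n \<T> c X Y f"
    unfolding cube_matching_def by blast
  then show ?case by (rule cube_matching.exists_injective_matching_Lip_le)
qed

end
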